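(* Let $\Gamma$ be a weighted digraph with vertex set $\{1,\dots,n\}$, $n>1$, without loops and with strictly positive arc weights, with Laplacian matrix $L$, matrices of in-forests $Q_k$ and in-forest weights $\sigma_k$. Then for every $k=0,1,2,\dots$, $$Q_k=\sum_{i=0}^{k}\sigma_{k-i}(-L)^i.$$
   Context: $W=(w_{ij})$ is the matrix of arc weights ($w_{ij}>0$ iff there is an arc $i\to j$, else $0$). The Laplacian $L=(\ell_{ij})$: $\ell_{ij}=-w_{ij}$ for $j\ne i$, $\ell_{ii}=\sum_{k\ne i}w_{ik}$. The weight of a subgraph is the product of its arc weights (1 if no arcs); the weight of a set of subgraphs is the sum of their weights (0 for the empty set). A converging tree is a weakly connected digraph with one vertex (the root) of outdegree 0 and all others of outdegree 1; an in-forest is a spanning subgraph of $\Gamma$ whose weak components are converging trees. $\sigma_k$ is the total weight of in-forests of $\Gamma$ with $k$ arcs ($\sigma_0=1$). $Q_k=(q^k_{ij})$ where $q^k_{ij}$ is the total weight of in-forests with $k$ arcs in which $i$ lies in a tree rooted at $j$ ($Q_0=I$). *)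

theory Defs
  imports "HOL-Analysis.Analysis"
begin

text \<open>Vertices are the elements of a finite type 'n (n = CARD('n)); a weighted digraph
  is given by its weight matrix W, with an arc i -> j iff W i j > 0.\<close>

definition arcs :: "real^'n^'n \<Rightarrow> ('n \<times> 'n) set" where
  "arcs W = {(i,j). W$i$j > 0}"

definition laplacian :: "real^'n^'n \<Rightarrow> real^'n^'n" where
  "laplacian W = (\<chi> i j. if i = j then (\<Sum>k\<in>UNIV-{i}. W$i$k) else - W$i$j)"

primrec matpow :: "real^'n^'n \<Rightarrow> nat \<Rightarrow> real^'n^'n" where
  "matpow A 0 = mat 1"
| "matpow A (Suc m) = matpow A m ** A"

definition outdeg :: "('n \<times> 'n) set \<Rightarrow> 'n \<Rightarrow> nat" where
  "outdeg F v = card {x. (v,x) \<in> F}"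

definition wcomp :: "('n \<times> 'n) set \<Rightarrow> 'n \<Rightarrow> 'n set" where
  "wcomp F v = {u. (v,u) \<in> (F \<union> F\<inverse>)\<^sup>*}"

definition converging_tree :: "('n \<times> 'n) set \<Rightarrow> 'n set \<Rightarrow> bool" where
  "converging_tree F C \<longleftrightarrow> (\<exists>r\<in>C. outdeg F r = 0 \<and> (\<forall>v\<in>C-{r}. outdeg F v = 1))"

definition in_forest :: "real^'n^'n \<Rightarrow> ('n \<times> 'n) set \<Rightarrow> bool" where
  "in_forest W F \<longleftrightarrow> F \<subseteq> arcs W \<and> (\<forall>v. converging_tree F (wcomp F v))"

definition tree_root :: "('n \<times> 'n) set \<Rightarrow> 'n \<Rightarrow> 'n \<Rightarrow> bool" where
  "tree_root F i j \<longleftrightarrow> j \<in> wcomp F i \<and> outdeg F j = 0"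

definition weight :: "real^'n^'n \<Rightarrow> ('n \<times> 'n) set \<Rightarrow> real" where
  "weight W F = (\<Prod>(i,j)\<in>F. W$i$j)"

definition sigma :: "real^'n^'n \<Rightarrow> nat \<Rightarrow> real" where
  "sigma W k = (\<Sum>F\<in>{F. in_forest W F \<and> card F = k}. weight W F)"

definition Qmat :: "real^'n^'n \<Rightarrow> nat \<Rightarrow> real^'n^'n" where
  "Qmat W k = (\<chi> i j. \<Sum>F\<in>{F. in_forest W F \<and> card F = k \<and> tree_root F i j}. weight W F)"

end

theory Submission
  imports Defs
begin

text \<open>
  In-forests are exactly the functional acyclic sets of arcs, and in such a forest every
  vertex reaches a unique root. We show \<open>Q\<^sub>0 = I\<close> and
  \<open>Q\<^sub>k\<^sub>+\<^sub>1 = \<sigma>\<^sub>k\<^sub>+\<^sub>1 I - L Q\<^sub>k\<close>, which unrolls to the formula.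
  Fix a row i. The forests with k + 1 arcs in which i is not a root arise exactly once by
  attaching the root i of a forest H with k arcs to a vertex m outside the tree of i.
  Expanding \<open>(L Q\<^sub>k)\<^sub>i\<^sub>j = \<Sum>\<^sub>m w\<^sub>i\<^sub>m (q\<^sub>i\<^sub>j - q\<^sub>m\<^sub>j)\<close> forest by forest, a forest H in
  which i is a root contributes its attachments G with weight \<open>\<delta>\<^sub>i\<^sub>j - [root\<^sub>G(i) = j]\<close>,
  while the forests in which i is not a root cancel in pairs, by exchanging the two
  attachment targets. Together with the (k + 1)-arc forests in which i is a root,
  this leaves \<open>\<sigma>\<^sub>k\<^sub>+\<^sub>1 \<delta>\<^sub>i\<^sub>j\<close>.
\<close>

section \<open>Roots in functional acyclic relations\<close>

definition rooted :: "('a \<times> 'a) set \<Rightarrow> 'a \<Rightarrow> 'a \<Rightarrow> bool" where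
  "rooted F v r \<longleftrightarrow> (v, r) \<in> F\<^sup>* \<and> r \<notin> Domain F"

lemma rtrancl_from_outside_Domain: "r \<notin> Domain F \<Longrightarrow> (r, v) \<in> F\<^sup>* \<Longrightarrow> v = r"
  by (metis DomainI converse_rtranclE)

lemma rooted_step:
  assumes "single_valued F" "rooted F u r" "(u, w) \<in> F"
  shows "rooted F w r"
proof -
  have "(u, r) \<in> F\<^sup>*" "r \<notin> Domain F" using assms(2) unfolding rooted_def by auto
  moreover have "u \<noteq> r" using assms(3) \<open>r \<notin> Domain F\<close> by auto
  ultimately obtain y where "(u, y) \<in> F" "(y, r) \<in> F\<^sup>*"
    by (metis converse_rtranclE)
  with assms(1,3) have "(w, r) \<in> F\<^sup>*" by (metis single_valuedD)
  then show ?thesis using \<open>r \<notin> Domain F\<close> unfolding rooted_def by auto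
qed

lemma rooted_weak_path:
  assumes "single_valued F" "rooted F v r" "(v, u) \<in> (F \<union> F\<inverse>)\<^sup>*"
  shows "rooted F u r"
  using assms(3)
proof (induction rule: rtrancl_induct)
  case base
  show ?case using assms(2) .
next
  case (step u w)
  then consider "(u, w) \<in> F" | "(w, u) \<in> F" by auto
  then show ?case
  proof cases
    case 1
    then show ?thesis by (rule rooted_step[OF assms(1) step.IH])
  next
    case 2
    then show ?thesis using step.IH unfolding rooted_def
      by (meson converse_rtrancl_into_rtrancl)
  qed
qed

lemma rooted_unique:
  assumes "single_valued F" "rooted F v a" "rooted F v b"
  shows "a = b"
proof -
  have "(v, b) \<in> (F \<union> F\<inverse>)\<^sup>*" using assms(3) unfolding rooted_def by (meson in_rtrancl_UnI)
  then have "rooted F b a" using rooted_weak_path[OF assms(1,2)] by blast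
  then show ?thesis using assms(3) rtrancl_from_outside_Domain unfolding rooted_def by metis
qed

lemma rooted_exists:
  assumes "finite F" "acyclic F"
  shows "\<exists>r. rooted F v r"
proof -
  have "wf (F\<inverse>)" using assms by (simp add: finite_acyclic_wf_converse)
  then show ?thesis
  proof (induction v rule: wf_induct_rule)
    case (less v)
    show ?case
    proof (cases "v \<in> Domain F")
      case False
      then show ?thesis unfolding rooted_def by auto
    next
      case True
      then obtain x where "(v, x) \<in> F" by auto
      with less obtain r where "rooted F x r" by auto
      with \<open>(v, x) \<in> F\<close> show ?thesis unfolding rooted_def
        by (meson converse_rtrancl_into_rtrancl)
    qed
  qed
qed

lemma weak_path_into_cycle:
  assumes "single_valued F" "(c, c) \<in> F\<^sup>+" "(c, u) \<in> (F \<union> F\<inverse>)\<^sup>*"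
  shows "(u, c) \<in> F\<^sup>*"
  using assms(3)
proof (induction rule: rtrancl_induct)
  case base
  then show ?case by simp
next
  case (step u w)
  then consider "(u, w) \<in> F" | "(w, u) \<in> F" by auto
  then show ?case
  proof cases
    case 1
    have "(u, c) \<in> F\<^sup>+" using step.IH assms(2) by (metis rtrancl_eq_or_trancl)
    then obtain y where "(u, y) \<in> F" "(y, c) \<in> F\<^sup>*" by (meson tranclD)
    with 1 assms(1) show ?thesis by (metis single_valuedD)
  next
    case 2
    then show ?thesis using step.IH by (meson converse_rtrancl_into_rtrancl)
  qed
qed

section \<open>In-forests as functional acyclic arc sets\<close>

definition forest :: "real^'n^'n \<Rightarrow> ('n \<times> 'n) set \<Rightarrow> bool" where
  "forest W F \<longleftrightarrow> F \<subseteq> arcs W \<and> single_valued F \<and> acyclic F"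

lemma outdeg_eq_0_iff: "outdeg F v = 0 \<longleftrightarrow> v \<notin> Domain (F :: ('n::finite \<times> 'n) set)"
  unfolding outdeg_def by auto

lemma single_valued_if_outdeg_le_1:
  assumes "\<And>v. outdeg (F :: ('n::finite \<times> 'n) set) v \<le> 1"
  shows "single_valued F"
  unfolding single_valued_def
proof (intro allI impI)
  fix v x y assume "(v, x) \<in> F" "(v, y) \<in> F"
  then have "card {x, y} \<le> outdeg F v" unfolding outdeg_def by (intro card_mono) auto
  then show "x = y" using assms[of v] by (cases "x = y") auto
qed

lemma in_forest_imp_forest:
  assumes "in_forest W F"
  shows "forest W F"
proof -
  have trees: "converging_tree F (wcomp F v)" for v using assms unfolding in_forest_def by auto
  have "outdeg F v \<le> 1" for v
  proof -
    have "v \<in> wcomp F v" unfolding wcomp_def by auto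
    then show ?thesis using trees[of v] unfolding converging_tree_def
      by (metis Diff_iff le_refl singletonD zero_le)
  qed
  then have sv: "single_valued F" by (rule single_valued_if_outdeg_le_1)
  have "(c, c) \<notin> F\<^sup>+" for c
  proof
    assume cyc: "(c, c) \<in> F\<^sup>+"
    obtain r where r: "r \<in> wcomp F c" "r \<notin> Domain F"
      using trees[of c] unfolding converging_tree_def outdeg_eq_0_iff by auto
    then have "(r, c) \<in> F\<^sup>*" using weak_path_into_cycle[OF sv cyc] unfolding wcomp_def by blast
    then have "c = r" using r(2) rtrancl_from_outside_Domain by metis
    with cyc r(2) show False by (auto dest: tranclD)
  qed
  then show ?thesis using assms sv unfolding forest_def in_forest_def acyclic_def by blast
qed

lemma forest_imp_in_forest:
  assumes "forest W F"
  shows "in_forest W F"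
  unfolding in_forest_def
proof (intro conjI allI)
  show "F \<subseteq> arcs W" using assms unfolding forest_def by auto
  fix v
  have sv: "single_valued F" using assms unfolding forest_def by auto
  have "acyclic F" using assms unfolding forest_def by auto
  then obtain r where r: "rooted F v r" using rooted_exists[of F] by auto
  have "r \<in> wcomp F v" using r unfolding wcomp_def rooted_def by (simp add: in_rtrancl_UnI)
  moreover have "outdeg F r = 0" using r unfolding rooted_def outdeg_eq_0_iff by simp
  moreover have "outdeg F u = 1" if u: "u \<in> wcomp F v - {r}" for u
  proof -
    have "(u, r) \<in> F\<^sup>*" using rooted_weak_path[OF sv r] u unfolding wcomp_def rooted_def by auto
    moreover have "u \<noteq> r" using u by auto
    ultimately obtain x where "(u, x) \<in> F" by (metis converse_rtranclE)
    then have "{x. (u, x) \<in> F} = {x}" using sv by (auto dest: single_valuedD)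
    then show ?thesis unfolding outdeg_def by simp
  qed
  ultimately show "converging_tree F (wcomp F v)" unfolding converging_tree_def by blast
qed

lemma in_forest_iff_forest: "in_forest W F \<longleftrightarrow> forest W F"
  using in_forest_imp_forest forest_imp_in_forest by blast

lemma tree_root_iff_rooted:
  assumes "forest W F"
  shows "tree_root F i j \<longleftrightarrow> rooted F i j"
proof
  assume "rooted F i j"
  then show "tree_root F i j"
    unfolding tree_root_def wcomp_def rooted_def outdeg_eq_0_iff by (simp add: in_rtrancl_UnI)
next
  assume t: "tree_root F i j"
  have sv: "single_valued F" using assms unfolding forest_def by auto
  have "acyclic F" using assms unfolding forest_def by auto
  then obtain r where r: "rooted F i r" using rooted_exists[of F] by auto
  have "rooted F j r" using rooted_weak_path[OF sv r] t unfolding tree_root_def wcomp_def by auto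
  then have "j = r" using t rtrancl_from_outside_Domain unfolding tree_root_def rooted_def outdeg_eq_0_iff
    by metis
  then show "rooted F i j" using r by simp
qed

section \<open>Attaching a root to another tree\<close>

lemma forest_insert:
  assumes "forest W H" "i \<notin> Domain H" "(m, i) \<notin> H\<^sup>*" "0 < W$i$m"
  shows "forest W (insert (i, m) H)"
  using assms unfolding forest_def single_valued_def arcs_def by auto

lemma forest_remove:
  assumes "forest W F" "(i, m) \<in> F"
  shows "forest W (F - {(i, m)})" "i \<notin> Domain (F - {(i, m)})"
    and "(m, i) \<notin> (F - {(i, m)})\<^sup>*" "0 < W$i$m"
proof -
  show "forest W (F - {(i, m)})" using assms unfolding forest_def single_valued_def
    by (meson Diff_subset acyclic_subset subset_trans DiffD1)
  show "i \<notin> Domain (F - {(i, m)})" using assms unfolding forest_def by (auto dest: single_valuedD)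
  show "0 < W$i$m" using assms unfolding forest_def arcs_def by auto
  show "(m, i) \<notin> (F - {(i, m)})\<^sup>*"
  proof
    assume "(m, i) \<in> (F - {(i, m)})\<^sup>*"
    then have "(m, i) \<in> F\<^sup>*" by (meson Diff_subset rtrancl_mono subsetD)
    with assms(2) have "(i, i) \<in> F\<^sup>+" by (meson rtrancl_into_trancl2)
    with assms(1) show False unfolding forest_def acyclic_def by blast
  qed
qed

lemma rooted_insert:
  assumes "single_valued H" "i \<notin> Domain H" "(m, i) \<notin> H\<^sup>*"
  shows "rooted (insert (i, m) H) v r \<longleftrightarrow> (if (v, i) \<in> H\<^sup>* then rooted H m r else rooted H v r)"
proof -
  have path: "(v, r) \<in> (insert (i, m) H)\<^sup>* \<longleftrightarrow> (v, r) \<in> H\<^sup>* \<or> ((v, i) \<in> H\<^sup>* \<and> (m, r) \<in> H\<^sup>*)"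
    by (simp add: rtrancl_insert)
  have dom: "r \<notin> Domain (insert (i, m) H) \<longleftrightarrow> r \<notin> Domain H \<and> r \<noteq> i"
    by auto
  show ?thesis
  proof (cases "(v, i) \<in> H\<^sup>*")
    case True
    then have vi: "rooted H v i" using assms(2) unfolding rooted_def by simp
    have "rooted (insert (i, m) H) v r \<longleftrightarrow> rooted H m r"
    proof
      assume new: "rooted (insert (i, m) H) v r"
      then have "r \<notin> Domain H" "r \<noteq> i" using dom unfolding rooted_def by auto
      moreover have "(v, r) \<notin> H\<^sup>*"
        using rooted_unique[OF assms(1) vi] \<open>r \<notin> Domain H\<close> \<open>r \<noteq> i\<close> unfolding rooted_def by blast
      ultimately show "rooted H m r" using new path unfolding rooted_def by auto
    next
      assume "rooted H m r"
      moreover from this have "r \<noteq> i" using assms(3) unfolding rooted_def by auto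
      ultimately show "rooted (insert (i, m) H) v r" using True path dom unfolding rooted_def by auto
    qed
    then show ?thesis using True by simp
  next
    case False
    then have "r \<noteq> i" if "(v, r) \<in> H\<^sup>*" using that by auto
    then show ?thesis using False path dom unfolding rooted_def by auto
  qed
qed

definition forests :: "real^'n^'n \<Rightarrow> nat \<Rightarrow> ('n \<times> 'n) set set" where
  "forests W k = {F. forest W F \<and> card F = k}"

definition attach_targets :: "real^'n^'n \<Rightarrow> ('n \<times> 'n) set \<Rightarrow> 'n \<Rightarrow> 'n set" where
  "attach_targets W H i = {m. 0 < W$i$m \<and> (m, i) \<notin> H\<^sup>*}"

lemma forests_0: "forests W 0 = {{}}"
  unfolding forests_def forest_def single_valued_def acyclic_def by auto

lemma attach_bij_betw:
  fixes W :: "real^'n^'n"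
  shows "bij_betw (\<lambda>(H, m). insert (i, m) H)
           (SIGMA H:{H \<in> forests W k. i \<notin> Domain H}. attach_targets W H i)
           {G \<in> forests W (Suc k). i \<in> Domain G}"
proof (rule bij_betw_imageI)
  show "inj_on (\<lambda>(H, m). insert (i, m) H)
      (SIGMA H:{H \<in> forests W k. i \<notin> Domain H}. attach_targets W H i)"
  proof (rule inj_onI, clarsimp)
    fix H m H' m'
    assume "i \<notin> Domain H" "i \<notin> Domain H'" and eq: "insert (i, m) H = insert (i, m') H'"
    then have "m = m'" by (metis DomainI insertE insertI1 prod.inject)
    with eq \<open>i \<notin> Domain H\<close> \<open>i \<notin> Domain H'\<close> show "H = H' \<and> m = m'"
      by (metis DomainI insert_ident)
  qed
  show "(\<lambda>(H, m). insert (i, m) H) ` (SIGMA H:{H \<in> forests W k. i \<notin> Domain H}. attach_targets W H i)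
      = {G \<in> forests W (Suc k). i \<in> Domain G}"
  proof (intro equalityI subsetI)
    fix G assume "G \<in> (\<lambda>(H, m). insert (i, m) H) ` (SIGMA H:{H \<in> forests W k. i \<notin> Domain H}. attach_targets W H i)"
    then obtain H m where G: "G = insert (i, m) H" "forest W H" "card H = k" "i \<notin> Domain H"
      and m: "0 < W$i$m" "(m, i) \<notin> H\<^sup>*"
      unfolding forests_def attach_targets_def by auto
    have "(i, m) \<notin> H" using G(4) by auto
    then show "G \<in> {G \<in> forests W (Suc k). i \<in> Domain G}"
      using G m forest_insert unfolding forests_def by auto
  next
    fix G assume "G \<in> {G \<in> forests W (Suc k). i \<in> Domain G}"
    then obtain m where G: "forest W G" "card G = Suc k" "(i, m) \<in> G"
      unfolding forests_def by auto
    note R = forest_remove[OF G(1,3)]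
    have "card (G - {(i, m)}) = k" using G(2,3) by simp
    then have "(G - {(i, m)}, m) \<in> (SIGMA H:{H \<in> forests W k. i \<notin> Domain H}. attach_targets W H i)"
      using R unfolding forests_def attach_targets_def by auto
    moreover have "G = insert (i, m) (G - {(i, m)})" using G(3) by auto
    ultimately show "G \<in> (\<lambda>(H, m). insert (i, m) H) ` (SIGMA H:{H \<in> forests W k. i \<notin> Domain H}. attach_targets W H i)"
      by (metis (no_types, lifting) case_prod_conv image_eqI)
  qed
qed

lemma sum_forests_Domain:
  fixes W :: "real^'n^'n"
  shows "(\<Sum>G\<in>{G \<in> forests W (Suc k). i \<in> Domain G}. f G)
       = (\<Sum>H\<in>{H \<in> forests W k. i \<notin> Domain H}. \<Sum>m\<in>attach_targets W H i. f (insert (i, m) H))"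
  by (simp add: sum.Sigma sum.reindex_bij_betw[OF attach_bij_betw, symmetric] case_prod_beta')

section \<open>Root matrices and the Laplacian\<close>

definition root_matrix :: "('n \<times> 'n) set \<Rightarrow> real^'n^'n" where
  "root_matrix F = (\<chi> v r. of_bool (rooted F v r))"

lemma Qmat_eq_sum_root_matrix: "Qmat W k = (\<Sum>F\<in>forests W k. weight W F *\<^sub>R root_matrix F)"
proof -
  have "Qmat W k $ i $ j = (\<Sum>F\<in>forests W k. weight W F * root_matrix F $ i $ j)" for i j
  proof -
    have "{F. in_forest W F \<and> card F = k \<and> tree_root F i j} = {F \<in> forests W k. rooted F i j}"
      unfolding forests_def using in_forest_iff_forest tree_root_iff_rooted by blast
    then have "Qmat W k $ i $ j = (\<Sum>F\<in>{F \<in> forests W k. rooted F i j}. weight W F)"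
      unfolding Qmat_def by simp
    also have "\<dots> = (\<Sum>F\<in>forests W k. if rooted F i j then weight W F else 0)"
      by (rule sum.inter_filter) simp
    also have "\<dots> = (\<Sum>F\<in>forests W k. weight W F * root_matrix F $ i $ j)"
      unfolding root_matrix_def by (intro sum.cong) auto
    finally show ?thesis .
  qed
  then show ?thesis by (simp add: vec_eq_iff sum_component)
qed

lemma sigma_eq_sum_forests: "sigma W k = (\<Sum>F\<in>forests W k. weight W F)"
  unfolding sigma_def forests_def by (simp only: in_forest_iff_forest)

lemma root_matrix_empty: "root_matrix {} = mat 1"
  unfolding root_matrix_def rooted_def mat_def by (simp add: vec_eq_iff)

lemma root_matrix_root:
  assumes "single_valued H" "i \<notin> Domain H" "(m, i) \<in> H\<^sup>*"
  shows "root_matrix H $ m $ j = of_bool (i = j)"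
proof -
  have "rooted H m i" using assms(2,3) unfolding rooted_def by simp
  then show ?thesis using rooted_unique[OF assms(1)] unfolding root_matrix_def by auto
qed

lemma root_matrix_insert:
  assumes "single_valued H" "i \<notin> Domain H" "(m, i) \<notin> H\<^sup>*"
  shows "root_matrix (insert (i, m) H) $ v $ j
       = (if (v, i) \<in> H\<^sup>* then root_matrix H $ m $ j else root_matrix H $ v $ j)"
  using rooted_insert[OF assms] unfolding root_matrix_def by simp

lemma weight_insert:
  assumes "(i, m) \<notin> H"
  shows "weight W (insert (i, m) H) = W$i$m * weight W H"
  using assms unfolding weight_def by simp

lemma laplacian_mult_entry:
  "(laplacian W ** A) $ i $ j = (\<Sum>m\<in>UNIV. W$i$m * (A$i$j - A$m$j))"
proof -
  have "(laplacian W ** A) $ i $ j = (\<Sum>m\<in>UNIV-{i}. W$i$m) * A$i$j + (\<Sum>m\<in>UNIV-{i}. - W$i$m * A$m$j)"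
    by (simp add: matrix_matrix_mult_def laplacian_def sum.remove[of UNIV i])
  also have "\<dots> = (\<Sum>m\<in>UNIV-{i}. W$i$m * (A$i$j - A$m$j))"
    by (simp add: sum_distrib_right right_diff_distrib sum_subtractf sum_negf)
  also have "\<dots> = (\<Sum>m\<in>UNIV. W$i$m * (A$i$j - A$m$j))"
    by (simp add: sum.remove[of UNIV i])
  finally show ?thesis .
qed

lemma sum_row_attach_targets:
  fixes W :: "real^'n^'n"
  assumes "\<forall>i j. 0 \<le> W$i$j" and "\<And>m. (m, i) \<in> H\<^sup>* \<Longrightarrow> x m = c"
  shows "(\<Sum>m\<in>UNIV. W$i$m * (c - x m)) = (\<Sum>m\<in>attach_targets W H i. W$i$m * (c - x m))"
proof (rule sum.mono_neutral_right)
  show "\<forall>m\<in>UNIV - attach_targets W H i. W$i$m * (c - x m) = 0"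
    using assms unfolding attach_targets_def by (force simp: order.order_iff_strict)
qed auto

lemma laplacian_root_matrix_sink:
  fixes W :: "real^'n^'n"
  assumes "\<forall>i j. 0 \<le> W$i$j" "single_valued H" "i \<notin> Domain H"
  shows "(laplacian W ** root_matrix H) $ i $ j
       = (\<Sum>m\<in>attach_targets W H i. W$i$m * (of_bool (i = j) - root_matrix H $ m $ j))"
  using root_matrix_root[OF assms(2,3)] root_matrix_root[OF assms(2,3), of i]
  by (simp add: laplacian_mult_entry sum_row_attach_targets[OF assms(1)])

lemma laplacian_root_matrix_attached:
  fixes W :: "real^'n^'n"
  assumes "\<forall>i j. 0 \<le> W$i$j" "single_valued H" "i \<notin> Domain H" "m' \<in> attach_targets W H i"
  shows "(laplacian W ** root_matrix (insert (i, m') H)) $ i $ j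
       = (\<Sum>m\<in>attach_targets W H i. W$i$m * (root_matrix H $ m' $ j - root_matrix H $ m $ j))"
proof -
  let ?G = "insert (i, m') H"
  have "(m', i) \<notin> H\<^sup>*" using assms(4) unfolding attach_targets_def by simp
  note ins = root_matrix_insert[OF assms(2,3) this]
  have "(laplacian W ** root_matrix ?G) $ i $ j
      = (\<Sum>m\<in>UNIV. W$i$m * (root_matrix H $ m' $ j - root_matrix ?G $ m $ j))"
    by (simp add: laplacian_mult_entry ins)
  also have "\<dots> = (\<Sum>m\<in>attach_targets W H i. W$i$m * (root_matrix H $ m' $ j - root_matrix ?G $ m $ j))"
    using ins by (intro sum_row_attach_targets[OF assms(1)]) simp
  also have "\<dots> = (\<Sum>m\<in>attach_targets W H i. W$i$m * (root_matrix H $ m' $ j - root_matrix H $ m $ j))"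
    using ins by (intro sum.cong) (auto simp: attach_targets_def)
  finally show ?thesis .
qed

lemma sum_mult_sum_antisym:
  fixes c x :: "'a \<Rightarrow> 'b::comm_ring"
  shows "(\<Sum>a\<in>A. c a * (\<Sum>b\<in>A. c b * (x a - x b))) = 0"
proof -
  have "(\<Sum>a\<in>A. c a * (\<Sum>b\<in>A. c b * (x a - x b)))
      = (\<Sum>a\<in>A. \<Sum>b\<in>A. c a * c b * x a) - (\<Sum>a\<in>A. \<Sum>b\<in>A. c a * c b * x b)"
    by (simp add: sum_distrib_left sum_subtractf[symmetric] algebra_simps)
  also have "(\<Sum>a\<in>A. \<Sum>b\<in>A. c a * c b * x b) = (\<Sum>b\<in>A. \<Sum>a\<in>A. c a * c b * x b)"
    by (rule sum.swap)
  also have "\<dots> = (\<Sum>a\<in>A. \<Sum>b\<in>A. c a * c b * x a)"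
    by (simp add: mult.commute)
  finally show ?thesis by simp
qed

lemma weighted_laplacian_root_matrix_sink:
  fixes W :: "real^'n^'n"
  assumes "\<forall>i j. 0 \<le> W$i$j" "forest W H" "i \<notin> Domain H"
  shows "weight W H * (laplacian W ** root_matrix H) $ i $ j
       = (\<Sum>m\<in>attach_targets W H i.
            weight W (insert (i, m) H) * (of_bool (i = j) - root_matrix (insert (i, m) H) $ i $ j))"
proof -
  have sv: "single_valued H" using assms(2) unfolding forest_def by auto
  have "(i, m) \<notin> H" for m using assms(3) by auto
  then have "weight W (insert (i, m) H) * (of_bool (i = j) - root_matrix (insert (i, m) H) $ i $ j)
      = weight W H * (W$i$m * (of_bool (i = j) - root_matrix H $ m $ j))"
    if "m \<in> attach_targets W H i" for m
    using that root_matrix_insert[OF sv assms(3)]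
    by (auto simp: weight_insert attach_targets_def)
  then show ?thesis
    by (simp add: laplacian_root_matrix_sink[OF assms(1) sv assms(3)] sum_distrib_left)
qed

text \<open>The contributions of the forests attaching i to m' and to m cancel in pairs.\<close>
lemma sum_weighted_laplacian_root_matrix_attached:
  fixes W :: "real^'n^'n"
  assumes "\<forall>i j. 0 \<le> W$i$j" "forest W H" "i \<notin> Domain H"
  shows "(\<Sum>m'\<in>attach_targets W H i.
            weight W (insert (i, m') H) * (laplacian W ** root_matrix (insert (i, m') H)) $ i $ j) = 0"
proof -
  have sv: "single_valued H" using assms(2) unfolding forest_def by auto
  have "(i, m) \<notin> H" for m using assms(3) by auto
  let ?T = "attach_targets W H i" and ?x = "\<lambda>m. root_matrix H $ m $ j"
  have "(\<Sum>m'\<in>?T. weight W (insert (i, m') H) * (laplacian W ** root_matrix (insert (i, m') H)) $ i $ j)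
      = weight W H * (\<Sum>m'\<in>?T. W$i$m' * (\<Sum>m\<in>?T. W$i$m * (?x m' - ?x m)))"
    by (simp add: \<open>\<And>m. (i, m) \<notin> H\<close> laplacian_root_matrix_attached[OF assms(1) sv assms(3)]
        weight_insert sum_distrib_left mult_ac)
  also have "\<dots> = 0" by (simp add: sum_mult_sum_antisym)
  finally show ?thesis .
qed

section \<open>The recurrence for the forest matrices\<close>

lemma sum_filter_split:
  assumes "finite A"
  shows "sum f A = sum f {x \<in> A. P x} + sum f {x \<in> A. \<not> P x}"
proof -
  have "sum f A = sum f ({x \<in> A. P x} \<union> {x \<in> A. \<not> P x})"
    by (rule arg_cong[where f = "sum f"]) auto
  also have "\<dots> = sum f {x \<in> A. P x} + sum f {x \<in> A. \<not> P x}"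
    using assms by (intro sum.union_disjoint) auto
  finally show ?thesis .
qed

lemma matrix_mult_sum_scaleR_right:
  fixes A :: "real^'n^'m"
  shows "A ** (\<Sum>x\<in>S. c x *\<^sub>R B x) = (\<Sum>x\<in>S. c x *\<^sub>R (A ** B x))"
proof -
  have "(A ** (\<Sum>x\<in>S. c x *\<^sub>R B x)) $ i $ j = (\<Sum>x\<in>S. c x *\<^sub>R (A ** B x)) $ i $ j" for i j
  proof -
    have "(A ** (\<Sum>x\<in>S. c x *\<^sub>R B x)) $ i $ j = (\<Sum>m\<in>UNIV. \<Sum>x\<in>S. A$i$m * (c x * B x $ m $ j))"
      by (simp add: matrix_matrix_mult_def sum_component sum_distrib_left)
    also have "\<dots> = (\<Sum>x\<in>S. c x * (\<Sum>m\<in>UNIV. A$i$m * B x $ m $ j))"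
      by (subst sum.swap) (simp add: sum_distrib_left mult_ac)
    finally show ?thesis by (simp add: matrix_matrix_mult_def sum_component)
  qed
  then show ?thesis by (simp add: vec_eq_iff)
qed

lemma laplacian_Qmat_entry:
  fixes W :: "real^'n^'n"
  assumes "\<forall>i j. 0 \<le> W$i$j"
  shows "(laplacian W ** Qmat W k) $ i $ j
       = (\<Sum>G\<in>{G \<in> forests W (Suc k). i \<in> Domain G}.
            weight W G * (of_bool (i = j) - root_matrix G $ i $ j))"
proof -
  let ?c = "\<lambda>F. weight W F * (laplacian W ** root_matrix F) $ i $ j"
  have "(laplacian W ** Qmat W k) $ i $ j = (\<Sum>F\<in>forests W k. ?c F)"
    by (simp add: Qmat_eq_sum_root_matrix matrix_mult_sum_scaleR_right sum_component)
  also have "\<dots> = (\<Sum>F\<in>{F \<in> forests W k. i \<in> Domain F}. ?c F)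
      + (\<Sum>F\<in>{F \<in> forests W k. i \<notin> Domain F}. ?c F)"
    by (rule sum_filter_split) simp
  also have "(\<Sum>F\<in>{F \<in> forests W k. i \<in> Domain F}. ?c F) = 0"
  proof (cases k)
    case 0
    then have "{F \<in> forests W k. i \<in> Domain F} = {}" by (auto simp: forests_0)
    then show ?thesis by (simp only: sum.empty)
  next
    case (Suc k')
    have "(\<Sum>F\<in>{F \<in> forests W (Suc k'). i \<in> Domain F}. ?c F)
        = (\<Sum>H\<in>{H \<in> forests W k'. i \<notin> Domain H}. \<Sum>m\<in>attach_targets W H i. ?c (insert (i, m) H))"
      by (rule sum_forests_Domain)
    also have "\<dots> = 0"
      by (rule sum.neutral) (simp add: sum_weighted_laplacian_root_matrix_attached[OF assms] forests_def)
    finally show ?thesis using Suc by simp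
  qed
  also have "(\<Sum>F\<in>{F \<in> forests W k. i \<notin> Domain F}. ?c F)
      = (\<Sum>G\<in>{G \<in> forests W (Suc k). i \<in> Domain G}.
            weight W G * (of_bool (i = j) - root_matrix G $ i $ j))"
    unfolding sum_forests_Domain
    by (rule sum.cong) (simp_all add: weighted_laplacian_root_matrix_sink[OF assms] forests_def)
  finally show ?thesis by simp
qed

lemma Qmat_Suc:
  fixes W :: "real^'n^'n"
  assumes "\<forall>i j. 0 \<le> W$i$j"
  shows "Qmat W (Suc k) = sigma W (Suc k) *\<^sub>R mat 1 + (- laplacian W) ** Qmat W k"
proof -
  have "Qmat W (Suc k) $ i $ j + (laplacian W ** Qmat W k) $ i $ j = sigma W (Suc k) * of_bool (i = j)"
    for i j
  proof -
    let ?D = "{G \<in> forests W (Suc k). i \<in> Domain G}"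
      and ?S = "{G \<in> forests W (Suc k). i \<notin> Domain G}"
    have "Qmat W (Suc k) $ i $ j = (\<Sum>G\<in>forests W (Suc k). weight W G * root_matrix G $ i $ j)"
      by (simp add: Qmat_eq_sum_root_matrix sum_component)
    also have "\<dots> = (\<Sum>G\<in>?D. weight W G * root_matrix G $ i $ j)
        + (\<Sum>G\<in>?S. weight W G * root_matrix G $ i $ j)"
      by (rule sum_filter_split) simp
    finally have Q: "Qmat W (Suc k) $ i $ j = \<dots>" .
    have "root_matrix G $ i $ j = of_bool (i = j)" if "G \<in> ?S" for G
      using that root_matrix_root[of G i i j] unfolding forests_def forest_def by simp
    then have S: "(\<Sum>G\<in>?S. weight W G * root_matrix G $ i $ j) = (\<Sum>G\<in>?S. weight W G * of_bool (i = j))"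
      by (intro sum.cong) auto
    have L: "(laplacian W ** Qmat W k) $ i $ j
        = (\<Sum>G\<in>?D. weight W G * of_bool (i = j)) - (\<Sum>G\<in>?D. weight W G * root_matrix G $ i $ j)"
      by (simp add: laplacian_Qmat_entry[OF assms] right_diff_distrib sum_subtractf)
    have "sigma W (Suc k) * of_bool (i = j)
        = (\<Sum>G\<in>?D. weight W G * of_bool (i = j)) + (\<Sum>G\<in>?S. weight W G * of_bool (i = j))"
      unfolding sigma_eq_sum_forests sum_distrib_right by (rule sum_filter_split) simp
    then show ?thesis using Q S L by simp
  qed
  then show ?thesis
    by (simp add: vec_eq_iff matrix_matrix_mult_def mat_def sum_negf algebra_simps)
qed

lemma matpow_Suc_left: "matpow A (Suc m) = A ** matpow A m"
proof (induction m)
  case 0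
  then show ?case by simp
next
  case (Suc m)
  then show ?case by (metis matpow.simps(2) matrix_mul_assoc)
qed

lemma matpow_recurrence:
  fixes A :: "real^'n^'n"
  assumes "X 0 = c 0 *\<^sub>R mat 1"
    and "\<And>k. X (Suc k) = c (Suc k) *\<^sub>R mat 1 + A ** X k"
  shows "X k = (\<Sum>i\<le>k. c (k - i) *\<^sub>R matpow A i)"
proof (induction k)
  case 0
  then show ?case using assms(1) by simp
next
  case (Suc k)
  have "(\<Sum>i\<le>Suc k. c (Suc k - i) *\<^sub>R matpow A i)
      = c (Suc k) *\<^sub>R mat 1 + (\<Sum>i\<le>k. c (k - i) *\<^sub>R matpow A (Suc i))"
    by (simp only: sum.atMost_Suc_shift diff_Suc_Suc diff_zero matpow.simps(1))
  also have "\<dots> = c (Suc k) *\<^sub>R mat 1 + A ** (\<Sum>i\<le>k. c (k - i) *\<^sub>R matpow A i)"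
    by (simp only: matrix_mult_sum_scaleR_right matpow_Suc_left)
  finally show ?case using Suc assms(2) by simp
qed

theorem proposition6:
  fixes W :: "real^'n^'n" and k :: nat
  assumes "CARD('n) > 1"
    and "\<forall>i. W$i$i = 0"
    and "\<forall>i j. W$i$j \<ge> 0"
  shows "Qmat W k = (\<Sum>i\<le>k. sigma W (k - i) *\<^sub>R matpow (- laplacian W) i)"
proof (rule matpow_recurrence)
  show "Qmat W 0 = sigma W 0 *\<^sub>R mat 1"
    by (simp add: Qmat_eq_sum_root_matrix sigma_eq_sum_forests forests_0 root_matrix_empty weight_def)
  show "Qmat W (Suc k) = sigma W (Suc k) *\<^sub>R mat 1 + (- laplacian W) ** Qmat W k" for k
    using Qmat_Suc[OF assms(3)] .
qed

end
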